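(* Let $c\ge 1$ be an integer and consider the equivalence relation on permutations generated by the replacement partition of $S_{c+1}$ whose only nontrivial part is $\{x\in S_{c+1}: x_1=1\}$. For positive integers $k,n$ let $g(k,n)$ be the number of equivalence classes in $S_n$ containing at least one $k$-squished permutation. Then $$g(k,n)=\begin{cases} (n-1)!, & n<c+1,\\ 1, & c+1\le n\le ck+1,\\ \displaystyle g(k+1,n)+\sum_{j=ck+2}^{n} g(k,j-1)\, g(1,n-j+1)\binom{n-k-1}{n-j}, & n>ck+1.\end{cases}$$
   Context: Permutations are written in one-line notation as words. The order permutation (standardization) of a word $u$ of distinct positive integers of length $\ell$ is the unique $\pi\in S_\ell$ with $\pi_i<\pi_j$ iff $u_i<u_j$. The equivalence is generated by declaring $\phi\equiv\psi$ whenever $\phi=aub$ and $\psi=avb$ for words $a,b,u,v$ with $u,v$ of length $c+1$ whose order permutations both begin with $1$. A permutation of $S_n$ is $k$-squished if for each $j\le k$, the letter $j$ occurs among the first $c(j-1)+1$ positions. *)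

theory Defs
  imports Main
begin

definition perms :: "nat \<Rightarrow> nat list set" where
  "perms n = {xs. distinct xs \<and> set xs = {1..n}}"

definition stdz :: "nat list \<Rightarrow> nat list" where
  "stdz u = map (\<lambda>x. card {y \<in> set u. y \<le> x}) u"

definition rstep :: "nat \<Rightarrow> nat list \<Rightarrow> nat list \<Rightarrow> bool" where
  "rstep c phi psi \<longleftrightarrow> (\<exists>a u v b. phi = a @ u @ b \<and> psi = a @ v @ b \<and>
      length u = c + 1 \<and> length v = c + 1 \<and>
      hd (stdz u) = 1 \<and> hd (stdz v) = 1)"

definition requiv :: "nat \<Rightarrow> nat \<Rightarrow> (nat list \<times> nat list) set" where
  "requiv c n = {(phi, psi). phi \<in> perms n \<and> psi \<in> perms n \<and>
      (\<lambda>x y. x \<in> perms n \<and> y \<in> perms n \<and> rstep c x y)\<^sup>*\<^sup>* phi psi}"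

definition squished :: "nat \<Rightarrow> nat \<Rightarrow> nat list \<Rightarrow> bool" where
  "squished c k phi \<longleftrightarrow> (\<forall>j. 1 \<le> j \<and> j \<le> k \<and> j \<le> length phi \<longrightarrow>
      j \<in> set (take (c * (j - 1) + 1) phi))"

definition gcount :: "nat \<Rightarrow> nat \<Rightarrow> nat \<Rightarrow> nat" where
  "gcount c k n = card {C \<in> perms n // requiv c n. \<exists>phi \<in> C. squished c k phi}"

end

theory Submission
  imports Defs "HOL-Combinatorics.Multiset_Permutations"
begin

text \<open>A move rewrites a window of \<open>c + 1\<close> consecutive letters that begins with its smallest
  letter into another arrangement of the same letters beginning with that letter. A letter changed by
  a move lies at most \<open>c\<close> places to the right of the smaller first letter of its window, so moves
  preserve \<open>k\<close>-squishedness and it suffices to count classes of \<open>k\<close>-squished permutations.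
  For \<open>n \<le> c\<close> no move applies. For \<open>c + 1 \<le> n \<le> c k + 1\<close> every \<open>k\<close>-squished permutation is
  equivalent to the identity: by induction the word without its last letter may be sorted, and it may
  also be rearranged so that one move at the end brings the maximum into the last position.
  For \<open>n > c k + 1\<close>, a \<open>k\<close>-squished permutation that is not \<open>(k + 1)\<close>-squished has \<open>k + 1\<close> at
  some position \<open>j > c k + 1\<close>, and the \<open>c\<close> letters in front of it all exceed \<open>k + 1\<close>. No window can
  then straddle position \<open>j\<close>, so the class is the product of the classes of the two parts, which
  after relabelling are counted by \<open>g(k, j - 1)\<close> and \<open>g(1, n - j + 1)\<close>.\<close>

section \<open>Moves\<close>

definition move :: "nat \<Rightarrow> nat list \<Rightarrow> nat list \<Rightarrow> bool" where
  "move c x y \<longleftrightarrow> rstep c x y \<and> distinct x \<and> distinct y \<and> set x = set y"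

abbreviation word_equiv :: "nat \<Rightarrow> nat list \<Rightarrow> nat list \<Rightarrow> bool" where
  "word_equiv c \<equiv> (move c)\<^sup>*\<^sup>*"

lemma hd_stdz_eq_1_iff:
  assumes u: "u \<noteq> []"
  shows "hd (stdz u) = 1 \<longleftrightarrow> (\<forall>z\<in>set u. hd u \<le> z)"
proof
  have hd_stdz: "hd (stdz u) = card {y \<in> set u. y \<le> hd u}"
    using u by (cases u) (auto simp: stdz_def)
  have mem: "hd u \<in> {y \<in> set u. y \<le> hd u}" using u by simp
  {
    assume "hd (stdz u) = 1"
    then obtain w where w: "{y \<in> set u. y \<le> hd u} = {w}"
      using hd_stdz card_1_singletonE by metis
    show "\<forall>z\<in>set u. hd u \<le> z"
    proof
      fix z assume "z \<in> set u"
      show "hd u \<le> z"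
      proof (rule ccontr)
        assume "\<not> hd u \<le> z"
        then have "z \<in> {y \<in> set u. y \<le> hd u}" using \<open>z \<in> set u\<close> by simp
        then show False using w mem \<open>\<not> hd u \<le> z\<close> by auto
      qed
    qed
  }
  {
    assume "\<forall>z\<in>set u. hd u \<le> z"
    then have "{y \<in> set u. y \<le> hd u} = {hd u}" using u by (auto intro: antisym)
    then show "hd (stdz u) = 1" using hd_stdz by simp
  }
qed

lemma move_sym: "move c x y \<Longrightarrow> move c y x"
  unfolding move_def rstep_def by blast

lemma word_equiv_sym: "word_equiv c x y \<Longrightarrow> word_equiv c y x"
  by (induction rule: rtranclp_induct) (auto intro: move_sym converse_rtranclp_into_rtranclp)

text \<open>Since both words are permutations of the same letters, the two windows carry the same
  letters, hence the same (minimal) first letter.\<close>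
lemma moveE:
  assumes "move c x y"
  obtains a u v b where "x = a @ u @ b" "y = a @ v @ b" "length u = c + 1" "length v = c + 1"
    "\<forall>z\<in>set u. hd u \<le> z" "\<forall>z\<in>set v. hd v \<le> z" "set u = set v" "hd u = hd v"
    "distinct x" "distinct y" "set x = set y"
proof -
  from assms obtain a u v b where x: "x = a @ u @ b" and y: "y = a @ v @ b" and
    lu: "length u = c + 1" and lv: "length v = c + 1" and
    hu: "hd (stdz u) = 1" and hv: "hd (stdz v) = 1" and dx: "distinct x" and dy: "distinct y"
    and sxy: "set x = set y"
    unfolding move_def rstep_def by blast
  have ne: "u \<noteq> []" "v \<noteq> []" using lu lv by auto
  have min_u: "\<forall>z\<in>set u. hd u \<le> z" using hd_stdz_eq_1_iff[OF ne(1)] hu by blast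
  have min_v: "\<forall>z\<in>set v. hd v \<le> z" using hd_stdz_eq_1_iff[OF ne(2)] hv by blast
  have suv: "set u = set v"
  proof -
    have "set u = set x - set a - set b" using dx x by auto
    moreover have "set v = set y - set a - set b" using dy y by auto
    ultimately show ?thesis using sxy by simp
  qed
  then have "hd u = hd v"
    using min_u min_v ne by (metis antisym hd_in_set)
  with that x y lu lv min_u min_v suv dx dy sxy show ?thesis by blast
qed

lemma moveI:
  assumes "x = a @ u @ b" "y = a @ v @ b" "length u = c + 1" "length v = c + 1"
    "\<forall>z\<in>set u. hd u \<le> z" "\<forall>z\<in>set v. hd v \<le> z" "set u = set v"
    "distinct x" "distinct y"
  shows "move c x y"
proof -
  have ne: "u \<noteq> []" "v \<noteq> []" using assms(3,4) by auto
  show ?thesis unfolding move_def rstep_def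
    using assms hd_stdz_eq_1_iff[OF ne(1)] hd_stdz_eq_1_iff[OF ne(2)] by auto
qed

lemma move_invariants: "move c x y \<Longrightarrow> set y = set x \<and> length y = length x \<and> distinct y"
  by (erule moveE) auto

lemma word_equiv_invariants:
  "word_equiv c x y \<Longrightarrow> set y = set x \<and> length y = length x \<and> (distinct x \<longrightarrow> distinct y)"
  by (induction rule: rtranclp_induct) (auto dest: move_invariants)

lemma word_equiv_hd: "word_equiv c x y \<Longrightarrow> hd y = hd x"
proof (induction rule: rtranclp_induct)
  case (step y z)
  then obtain a u v b where "y = a @ u @ b" "z = a @ v @ b" "length u = c + 1" "length v = c + 1"
    "hd u = hd v" by (elim moveE) blast
  with step.IH show ?case by (cases a; cases u; cases v) auto
qed simp

lemma move_append:
  assumes "move c x y" "distinct (p @ x @ q)"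
  shows "move c (p @ x @ q) (p @ y @ q)"
proof -
  from assms(1) obtain a u v b where x: "x = a @ u @ b" and y: "y = a @ v @ b" and
    l: "length u = c + 1" "length v = c + 1" and h: "\<forall>z\<in>set u. hd u \<le> z" "\<forall>z\<in>set v. hd v \<le> z"
    and s: "set u = set v" and dy: "distinct y" and sxy: "set x = set y"
    by (elim moveE) blast
  have "distinct (p @ y @ q)" using assms(2) dy sxy by auto
  then show ?thesis
    by (intro moveI[where a="p @ a" and b="b @ q" and u=u and v=v]) (use x y l h s assms(2) in auto)
qed

lemma word_equiv_append:
  "word_equiv c x y \<Longrightarrow> distinct (p @ x @ q) \<Longrightarrow> word_equiv c (p @ x @ q) (p @ y @ q)"
proof (induction rule: rtranclp_induct)
  case (step y z)
  have "distinct (p @ y @ q)" using word_equiv_invariants[OF step.hyps(1)] step.prems by auto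
  then have "move c (p @ y @ q) (p @ z @ q)" using move_append step.hyps(2) by blast
  with step show ?case by (meson rtranclp.rtrancl_into_rtrancl)
qed simp

lemma move_map_strict_mono:
  assumes f: "strict_mono_on D f" and xD: "set x \<subseteq> D" and "move c x y"
  shows "move c (map f x) (map f y)"
proof -
  from \<open>move c x y\<close> obtain a u v b where x: "x = a @ u @ b" and y: "y = a @ v @ b" and
    lu: "length u = c + 1" and lv: "length v = c + 1" and
    hu: "\<forall>z\<in>set u. hd u \<le> z" and hv: "\<forall>z\<in>set v. hd v \<le> z" and suv: "set u = set v"
    and dx: "distinct x" and dy: "distinct y" and sxy: "set x = set y"
    by (elim moveE)
  have inj: "inj_on f D" using f by (rule strict_mono_on_imp_inj_on)
  have min_map: "\<forall>z\<in>set (map f w). hd (map f w) \<le> z"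
    if w: "w \<noteq> []" "set w \<subseteq> D" "\<forall>z\<in>set w. hd w \<le> z" for w
  proof
    fix z assume "z \<in> set (map f w)"
    then obtain z' where z': "z' \<in> set w" "z = f z'" by auto
    have "hd w \<in> D" using w by (simp add: subsetD)
    then have "f (hd w) \<le> f z'" using strict_mono_on_leD[OF f] w z' by blast
    then show "hd (map f w) \<le> z" using z' w by (simp add: hd_map)
  qed
  have uD: "set u \<subseteq> D" and vD: "set v \<subseteq> D" and yD: "set y \<subseteq> D" using xD x suv sxy by auto
  have "u \<noteq> []" "v \<noteq> []" using lu lv by auto
  then have hmu: "\<forall>z\<in>set (map f u). hd (map f u) \<le> z" and hmv: "\<forall>z\<in>set (map f v). hd (map f v) \<le> z"
    using min_map uD vD hu hv by auto
  have d1: "distinct (map f x)" using dx inj xD by (simp add: distinct_map inj_on_subset)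
  have d2: "distinct (map f y)" using dy inj yD by (simp add: distinct_map inj_on_subset)
  show ?thesis
    by (rule moveI[where a="map f a" and u="map f u" and v="map f v" and b="map f b"])
       (use x y lu lv hmu hmv suv d1 d2 in simp_all)
qed

lemma word_equiv_map_strict_mono:
  assumes f: "strict_mono_on D f" and "word_equiv c x y" and "set x \<subseteq> D"
  shows "word_equiv c (map f x) (map f y)"
  using assms(2,3)
proof (induction rule: rtranclp_induct)
  case (step y z)
  have "set y \<subseteq> D" using word_equiv_invariants[OF step.hyps(1)] step.prems by simp
  then have "move c (map f y) (map f z)" using move_map_strict_mono[OF f _ step.hyps(2)] by simp
  with step show ?case by (meson rtranclp.rtrancl_into_rtrancl)
qed simp

text \<open>\<open>l\<close> is the start of the window, whose first letter is kept and is its minimum.\<close>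
lemma move_changed_nth:
  assumes "move c x y" "i < length y" "y ! i \<noteq> x ! i"
  obtains l where "l < i" "i \<le> l + c" "x ! l < y ! i"
proof -
  from assms(1) obtain a u v b where x: "x = a @ u @ b" and y: "y = a @ v @ b" and
    lu: "length u = c + 1" and lv: "length v = c + 1" and
    hv: "\<forall>z\<in>set v. hd v \<le> z" and huv: "hd u = hd v" and dy: "distinct y"
    by (elim moveE) blast
  have window: "length a \<le> i \<and> i < length a + c + 1"
  proof (rule ccontr)
    assume "\<not> ?thesis"
    then have "y ! i = x ! i" using x y lu lv by (auto simp: nth_append)
    then show False using assms(3) by simp
  qed
  define t where "t = i - length a"
  have t: "t < length v" using window lv unfolding t_def by arith
  then have yi: "y ! i = v ! t"
    using window y t_def by (metis le_add_diff_inverse nth_append_left nth_append_length_plus)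
  have xl: "x ! length a = hd v" using x lu huv by (cases u) (simp_all add: nth_append)
  have yl: "y ! length a = hd v" using y lv by (cases v) (simp_all add: nth_append)
  have "t \<noteq> 0" using assms(3) xl yl window t_def by (metis add.right_neutral le_add_diff_inverse)
  then have "length a < i" using window t_def by simp
  moreover have "hd v < y ! i"
  proof -
    have "y ! i \<in> set v" using yi t by simp
    moreover have "y ! i \<noteq> y ! length a"
      using dy \<open>length a < i\<close> assms(2) by (simp add: nth_eq_iff_index_eq)
    ultimately show ?thesis using hv yl by fastforce
  qed
  ultimately show thesis using that[of "length a"] window xl by simp
qed

lemma word_equiv_short: "word_equiv c x y \<Longrightarrow> length x < c + 1 \<Longrightarrow> y = x"
proof (induction rule: rtranclp_induct)
  case (step y z)
  then have "y = x" by simp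
  from step.hyps(2) obtain a u v b where "y = a @ u @ b" "length u = c + 1" by (elim moveE)
  then show ?case using step.prems \<open>y = x\<close> by simp
qed simp

section \<open>Squished words\<close>

lemma squished_iff_nth: "squished c k xs \<longleftrightarrow>
   (\<forall>j. 1 \<le> j \<and> j \<le> k \<and> j \<le> length xs \<longrightarrow> (\<exists>i<length xs. i \<le> c*(j-1) \<and> xs!i = j))"
proof -
  have "j \<in> set (take (c * (j - 1) + 1) xs) \<longleftrightarrow> (\<exists>i<length xs. i \<le> c*(j-1) \<and> xs!i = j)" for j
    by (auto simp: in_set_conv_nth less_Suc_eq_le)
  then show ?thesis unfolding squished_def by simp
qed

lemma squished_mono: "squished c k xs \<Longrightarrow> k' \<le> k \<Longrightarrow> squished c k' xs"
  unfolding squished_def by auto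

lemma squished_Suc_iff:
  "squished c (Suc k) x \<longleftrightarrow>
    squished c k x \<and> (Suc k \<le> length x \<longrightarrow> Suc k \<in> set (take (c * k + 1) x))"
  unfolding squished_def by (auto simp: le_Suc_eq)

lemma squished_1_iff: "squished c 1 x \<longleftrightarrow> (x = [] \<or> hd x = 1)"
  by (cases x) (auto simp: squished_def)

lemma squished_nth_le:
  assumes "squished c k x" "distinct x" "1 \<le> j" "j \<le> k" "j \<le> length x" "i < length x" "x!i = j"
  shows "i \<le> c*(j-1)"
proof -
  obtain i' where "i' < length x" "i' \<le> c*(j-1)" "x!i' = j"
    using assms(1,3,4,5) unfolding squished_iff_nth by blast
  then show ?thesis using assms(2,6,7) by (metis nth_eq_iff_index_eq)
qed

lemma squished_letters:
  assumes "squished c k p" "k \<le> length p"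
  shows "{1..k} \<subseteq> set p"
  using assms unfolding squished_iff_nth by (force intro: nth_mem)

lemma squished_butlast:
  assumes "squished c k (p @ [v])" "k < v"
  shows "squished c k p"
  unfolding squished_iff_nth
proof (intro allI impI)
  fix j assume j: "1 \<le> j \<and> j \<le> k \<and> j \<le> length p"
  then obtain i where i: "i < length (p @ [v])" "i \<le> c*(j-1)" "(p @ [v])!i = j"
    using assms(1) unfolding squished_iff_nth by fastforce
  have "i \<noteq> length p" using i(3) j assms(2) by auto
  then have "i < length p" using i(1) by simp
  then show "\<exists>i<length p. i \<le> c*(j-1) \<and> p!i = j" using i by (auto simp: nth_append)
qed

lemma squished_append:
  assumes "squished c k p" "k \<le> length p"
  shows "squished c k (p @ q)"
  using assms unfolding squished_iff_nth by (fastforce simp: nth_append)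

lemma squished_take:
  assumes "squished c k x" "c * (k - 1) < i"
  shows "squished c k (take i x)"
  unfolding squished_iff_nth
proof (intro allI impI)
  fix j assume j: "1 \<le> j \<and> j \<le> k \<and> j \<le> length (take i x)"
  then obtain t where t: "t < length x" "t \<le> c * (j - 1)" "x ! t = j"
    using assms(1) unfolding squished_iff_nth by fastforce
  have "c * (j - 1) \<le> c * (k - 1)" using j by (intro mult_le_mono2) linarith
  then have "t < i" using t(2) assms(2) by linarith
  then show "\<exists>t<length (take i x). t \<le> c * (j - 1) \<and> take i x ! t = j" using t by auto
qed

lemma squished_map:
  assumes "\<forall>i\<in>set x. \<forall>j\<in>{1..k}. f i = j \<longleftrightarrow> i = j"
  shows "squished c k (map f x) \<longleftrightarrow> squished c k x"
proof -
  have "map f x ! i = j \<longleftrightarrow> x ! i = j" if "i < length x" "1 \<le> j \<and> j \<le> k" for i j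
    using assms that by simp
  then show ?thesis unfolding squished_iff_nth length_map by blast
qed

lemma squished_upt: "1 \<le> c \<Longrightarrow> squished c k [1..<n+1]"
  unfolding squished_iff_nth
proof (intro allI impI)
  fix j assume c: "1 \<le> c" and j: "1 \<le> j \<and> j \<le> k \<and> j \<le> length [1..<n+1]"
  have "j \<le> n" using j by (simp only: length_upt) simp
  then have "[1..<n+1] ! (j - 1) = j" using j by (subst nth_upt) auto
  have "j - 1 < length [1..<n+1]" using \<open>j \<le> n\<close> j by (simp only: length_upt) arith
  moreover have "j - 1 \<le> c * (j - 1)" using c by simp
  ultimately show "\<exists>i<length [1..<n+1]. i \<le> c * (j - 1) \<and> [1..<n+1] ! i = j"
    using \<open>[1..<n+1] ! (j - 1) = j\<close> by blast
qed

lemma squished_upt_append: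
  assumes "1 \<le> c" "k - 1 + length w \<le> c * (k - 1)"
  shows "squished c k ([1..<k] @ w @ [k] @ z)"
  unfolding squished_iff_nth
proof (intro allI impI)
  fix j assume j: "1 \<le> j \<and> j \<le> k \<and> j \<le> length ([1..<k] @ w @ [k] @ z)"
  show "\<exists>i<length ([1..<k] @ w @ [k] @ z). i \<le> c * (j - 1) \<and> ([1..<k] @ w @ [k] @ z) ! i = j"
  proof (cases "j < k")
    case True
    then show ?thesis using j assms(1) by (intro exI[of _ "j - 1"]) (auto simp: nth_append)
  next
    case False
    then show ?thesis using j assms(2) by (intro exI[of _ "k - 1 + length w"]) (auto simp: nth_append)
  qed
qed

lemma squished_last_gt:
  assumes s: "squished c k x" and dx: "distinct x" and z: "0 \<notin> set x" and xn: "x \<noteq> []"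
    and lt: "c * (k - 1) + 1 < length x" and c: "1 \<le> c"
  shows "k < last x"
proof (rule ccontr)
  assume "\<not> k < last x"
  then have vk: "last x \<le> k" by simp
  have v1: "1 \<le> last x" using z xn by (metis last_in_set less_one not_le)
  have "k - 1 \<le> c * (k - 1)" using c by simp
  then have "last x \<le> length x" using vk lt by linarith
  moreover have "x ! (length x - 1) = last x" using xn by (simp add: last_conv_nth)
  ultimately have "length x - 1 \<le> c * (last x - 1)"
    using squished_nth_le[OF s dx v1 vk] xn by simp
  also have "\<dots> \<le> c * (k - 1)" using vk by (intro mult_le_mono2) simp
  finally show False using lt by simp
qed

lemma squished_suffix_gt:
  assumes s: "squished c k p" and dp: "distinct p" and z: "0 \<notin> set p" and nk: "k + 1 \<notin> set p"
    and lp: "c * k + 1 \<le> length p" and c1: "1 \<le> c"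
  shows "\<forall>i. length p - c \<le> i \<longrightarrow> i < length p \<longrightarrow> k + 1 < p ! i"
proof (intro allI impI)
  fix i assume i1: "length p - c \<le> i" and i2: "i < length p"
  define m where "m = p ! i"
  have mp: "m \<in> set p" using i2 by (simp add: m_def)
  show "k + 1 < p ! i"
  proof (rule ccontr)
    assume "\<not> k + 1 < p ! i"
    moreover have "m \<noteq> k + 1" using mp nk by blast
    ultimately have mk: "m \<le> k" using m_def by linarith
    have m1: "1 \<le> m" using mp z by (metis less_one not_le)
    have "k \<le> c * k" using c1 by simp
    then have ml: "m \<le> length p" using mk lp by linarith
    have "i \<le> c * (m - 1)" using squished_nth_le[OF s dp m1 mk ml i2] m_def by simp
    also have "\<dots> \<le> c * (k - 1)" using mk by (intro mult_le_mono2) simp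
    finally have "i \<le> c * (k - 1)" .
    moreover have "c * (k - 1) + c = c * k" using mk m1 by (cases k) (auto simp: algebra_simps)
    ultimately show False using i1 lp by linarith
  qed
qed

lemma move_squished:
  assumes m: "move c x y" and z: "0 \<notin> set x" and s: "squished c k x"
  shows "squished c k y"
  unfolding squished_iff_nth
proof (intro allI impI)
  fix j assume j: "1 \<le> j \<and> j \<le> k \<and> j \<le> length y"
  from m have dx: "distinct x" and sxy: "set x = set y" and lxy: "length x = length y"
    using move_invariants[OF m] move_invariants[OF move_sym[OF m]] by auto
  obtain i0 where "i0 < length x" "x!i0 = j" using s j lxy unfolding squished_iff_nth by fastforce
  then have "j \<in> set y" using sxy nth_mem by metis
  then obtain i where i: "i < length y" "y!i = j" by (metis in_set_conv_nth)
  have "i \<le> c*(j-1)"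
  proof (cases "y ! i = x ! i")
    case True
    then have "x ! i = j" using i(2) by simp
    then show ?thesis using squished_nth_le[OF s dx, of j i] j i(1) lxy by simp
  next
    case False
    obtain l where l: "l < i" "i \<le> l + c" "x ! l < y ! i"
      by (rule move_changed_nth[OF m i(1) False])
    have "x ! l \<in> set x" using l i lxy by simp
    then have pos: "1 \<le> x ! l" using z by (metis less_one not_le)
    have "l \<le> c * (x ! l - 1)"
      using squished_nth_le[OF s dx pos] l i j lxy by simp
    moreover have "c * (x ! l - 1) + c = c * (x ! l)" using pos by (cases "x ! l") simp_all
    ultimately have "i \<le> c * (x ! l)" using l by linarith
    also have "\<dots> \<le> c * (j - 1)" using l i by (intro mult_le_mono2) simp
    finally show ?thesis .
  qed
  then show "\<exists>i<length y. i \<le> c*(j-1) \<and> y!i = j" using i by blast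
qed

lemma word_equiv_squished:
  "word_equiv c x y \<Longrightarrow> 0 \<notin> set x \<Longrightarrow> squished c k x \<Longrightarrow> squished c k y"
proof (induction rule: rtranclp_induct)
  case (step y z)
  then show ?case using move_squished word_equiv_invariants by metis
qed simp

section \<open>Sorting short squished words\<close>

lemma sorted_list_of_set_snoc:
  assumes "finite A" "\<forall>a\<in>A. a < (m::nat)"
  shows "sorted_list_of_set (insert m A) = sorted_list_of_set A @ [m]"
proof -
  have "sorted_wrt (<) (sorted_list_of_set A @ [m])"
    using assms by (simp add: sorted_wrt_append strict_sorted_list_of_set)
  then have "sorted_list_of_set (set (sorted_list_of_set A @ [m])) = sorted_list_of_set A @ [m]"
    by (metis sorted_list_of_set.idem_if_sorted_distinct strict_sorted_iff)
  then show ?thesis using assms by simp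
qed

lemma last_sorted_eq_Max: "sorted_wrt (<) (xs::nat list) \<Longrightarrow> xs \<noteq> [] \<Longrightarrow> last xs = Max (set xs)"
proof (induction xs)
  case (Cons a xs)
  show ?case
  proof (cases "xs = []")
    case False
    then have "last xs = Max (set xs)" using Cons by simp
    moreover have "a < Max (set xs)" using Cons.prems False by simp
    ultimately show ?thesis using False by (simp add: max_def)
  qed simp
qed simp

lemma move_to_sorted:
  assumes "distinct x" "length x = c + 1" "\<forall>z\<in>set x. hd x \<le> z"
  shows "move c x (sorted_list_of_set (set x))"
proof -
  define S where "S = sorted_list_of_set (set x)"
  have x: "x \<noteq> []" using assms(2) by auto
  have "set S = set x" "distinct S" "length S = length x"
    using assms(1) by (simp_all add: S_def distinct_card)
  moreover have "\<forall>z\<in>set S. hd S \<le> z"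
    using sorted_list_of_set_nonempty[of "set x"] x by (simp add: S_def)
  ultimately show ?thesis unfolding S_def[symmetric]
    by (intro moveI[of x "[]" x "[]" S S]) (use assms in simp_all)
qed

text \<open>The arrangement of the letters of \<open>P\<close> used to bring the maximum \<open>M\<close> to the end: \<open>1, \<dots>, k - 1\<close>,
  then the smallest remaining letters, then \<open>k\<close> (at position \<open>card P - c\<close>, which is as late as
  \<open>k\<close>-squishedness allows), then the \<open>c - 1\<close> largest letters, ending with \<open>M\<close>.\<close>
lemma squished_arrangement_ending_with_max:
  fixes P :: "nat set"
  assumes P: "finite P" "0 \<notin> P" "{1..k} \<subseteq> P" and M: "M \<in> P" "k < M" "\<forall>y\<in>P. y \<le> M"
    and c: "2 \<le> c" and len: "k + c \<le> card P + 1" "card P \<le> c * k"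
  obtains a d where "distinct (a @ [k] @ d @ [M])" "set (a @ [k] @ d @ [M]) = P"
    "squished c k (a @ [k] @ d @ [M])" "length d = c - 2" "\<forall>z\<in>set d. k < z"
proof -
  have k: "1 \<le> k"
  proof (rule ccontr)
    assume "\<not> 1 \<le> k"
    then have "k = 0" by simp
    then show False using len c by simp
  qed
  define Y where "Y = P - {1..k}"
  define D where "D = sorted_list_of_set Y"
  define t where "t = card P - k - (c - 1)"
  have sD: "set D = Y" and sortD: "sorted_wrt (<) D"
    using P by (simp_all add: D_def Y_def strict_sorted_list_of_set)
  have lD: "length D = card P - k"
    using P by (simp add: D_def Y_def card_Diff_subset)
  have Ygt: "\<forall>y\<in>Y. k < y" using P by (auto simp: Y_def not_le)
  have MD: "M \<in> set D" using M sD by (simp add: Y_def)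
  define d2 where "d2 = drop t D"
  have ld2: "length d2 = c - 1" using lD len c by (simp add: d2_def t_def)
  have d2n: "d2 \<noteq> []" using ld2 c by auto
  have "last D = M"
  proof -
    have "last D = Max (set D)" using last_sorted_eq_Max[OF sortD] MD by (metis empty_iff list.set(1))
    also have "\<dots> = M" using MD M sD P(1) by (intro Max_eqI) (auto simp: Y_def)
    finally show ?thesis .
  qed
  then have d2M: "d2 = butlast d2 @ [M]" using d2n by (metis append_butlast_last_id d2_def last_drop drop_eq_Nil2 not_le)
  define a where "a = [1..<k] @ take t D"
  define d where "d = butlast d2"
  have r: "a @ [k] @ d @ [M] = [1..<k] @ take t D @ [k] @ d2"
    using d2M by (simp add: a_def d_def)
  have tD: "take t D @ d2 = D" by (simp add: d2_def)
  have set_r: "set (a @ [k] @ d @ [M]) = P"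
  proof -
    have "set ([1..<k] @ take t D @ [k] @ d2) = {1..<k} \<union> {k} \<union> set (take t D @ d2)"
      by auto
    also have "\<dots> = P" using P k by (auto simp: tD sD Y_def)
    finally show ?thesis using r by simp
  qed
  have "length (a @ [k] @ d @ [M]) = card P" using r lD ld2 len c k by (simp add: t_def)
  then have dist_r: "distinct (a @ [k] @ d @ [M])" using set_r by (metis card_distinct)
  have "k - 1 + length (take t D) \<le> c * (k - 1)" using len c k lD by (simp add: t_def algebra_simps)
  then have "squished c k ([1..<k] @ take t D @ [k] @ d2)" using c by (intro squished_upt_append) simp
  moreover have "length d = c - 2" using ld2 by (simp add: d_def)
  moreover have "\<forall>z\<in>set d. k < z"
    using Ygt sD by (auto simp: d_def d2_def dest: in_set_butlastD in_set_dropD)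
  ultimately show thesis using that dist_r set_r r by metis
qed

text \<open>By induction all relevant words of length \<open>length p\<close> are equivalent to their sorted
  rearrangement, so \<open>p\<close> may be replaced by the arrangement of
  \<open>squished_arrangement_ending_with_max\<close>; one move then swaps the maximum \<open>M\<close> past \<open>v\<close>.\<close>
lemma word_equiv_max_to_end:
  assumes IH: "\<And>y. length y = length p \<Longrightarrow> distinct y \<Longrightarrow> 0 \<notin> set y \<Longrightarrow> squished c k y \<Longrightarrow>
      word_equiv c y (sorted_list_of_set (set y))"
    and x: "distinct (p @ [v])" "0 \<notin> set (p @ [v])" "squished c k p" "k < v"
    and M: "M \<in> set p" "v < M" "\<forall>y\<in>set p. y \<le> M"
    and len: "1 \<le> c" "k + c \<le> length p + 1" "length p \<le> c * k"
  obtains r' where "word_equiv c (p @ [v]) (r' @ [M])" "squished c k r'"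
proof -
  have dp: "distinct p" and zp: "0 \<notin> set p" using x by auto
  have kp: "k \<le> length p" using len by linarith
  have low: "{1..k} \<subseteq> set p" using squished_letters[OF x(3) kp] .
  have lp: "length p = card (set p)" using dp by (simp add: distinct_card)
  have c: "2 \<le> c"
  proof (rule ccontr)
    assume "\<not> 2 \<le> c"
    then have "c = 1" using len by simp
    then have "card (set p) \<le> card {1..k}" using len lp by simp
    then have "set p = {1..k}" using card_seteq[OF finite_set low] by simp
    then show False using M x(4) by auto
  qed
  have kM: "k < M" using M x(4) by simp
  obtain a d where r: "distinct (a @ [k] @ d @ [M])" "set (a @ [k] @ d @ [M]) = set p"
    "squished c k (a @ [k] @ d @ [M])" and ld: "length d = c - 2" and dk: "\<forall>z\<in>set d. k < z"
    using squished_arrangement_ending_with_max[OF finite_set zp low M(1) kM M(3) c] len lp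
    by (metis (no_types, lifting))
  define r where "r = a @ [k] @ d @ [M]"
  define r' where "r' = a @ [k] @ d @ [v]"
  have lr: "length r = length p" using r lp by (metis distinct_card r_def)
  note r = r[folded r_def]
  have "word_equiv c r (sorted_list_of_set (set p))"
    using IH[OF lr r(1) _ r(3)] r(2) zp by simp
  then have "word_equiv c p r"
    using rtranclp_trans[OF IH[OF refl dp zp x(3)] word_equiv_sym] by blast
  then have e: "word_equiv c (p @ [v]) (r @ [v])"
    using word_equiv_append[of c p r "[]" "[v]"] x(1) by simp
  have d_rv: "distinct (r @ [v])" using r(1,2) x(1) by simp
  have m: "move c (r @ [v]) (r' @ [M])"
  proof (rule moveI[of _ a "[k] @ d @ [M, v]" "[]" _ "[k] @ d @ [v, M]"])
    show "distinct (r' @ [M])" using d_rv by (auto simp: r_def r'_def)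
  qed (use ld c dk M(2) x(4) d_rv in \<open>auto simp: r_def r'_def\<close>)
  have "squished c k (r @ [v])" using squished_append[OF r(3)] kp lr by simp
  moreover have "0 \<notin> set (r @ [v])" using r(2) x(2) by simp
  ultimately have "squished c k (r' @ [M])" by (rule move_squished[OF m, rotated])
  then have "squished c k r'" using squished_butlast kM by auto
  moreover have "word_equiv c (p @ [v]) (r' @ [M])" using e m by (rule rtranclp.rtrancl_into_rtrancl)
  ultimately show thesis using that by blast
qed

lemma word_equiv_sorted_step:
  assumes IH: "\<And>y. length y = length p \<Longrightarrow> distinct y \<Longrightarrow> 0 \<notin> set y \<Longrightarrow> squished c k y \<Longrightarrow>
      word_equiv c y (sorted_list_of_set (set y))"
    and x: "distinct (p @ [v])" "0 \<notin> set (p @ [v])" "squished c k p" "k < v"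
    and len: "1 \<le> c" "k + c \<le> length p + 1" "length p \<le> c * k"
  shows "word_equiv c (p @ [v]) (sorted_list_of_set (set (p @ [v])))"
proof -
  define M where "M = Max (set (p @ [v]))"
  have M_max: "\<forall>z\<in>set (p @ [v]). z \<le> M" by (simp add: M_def)
  have sorted_snoc: "sorted_list_of_set (set (p @ [v])) = sorted_list_of_set (set q) @ [M]"
    if "distinct (q @ [M])" "set (q @ [M]) = set (p @ [v])" for q
  proof -
    have "\<forall>a\<in>set q. a < M" using that M_max by (fastforce simp: order.order_iff_strict)
    moreover have "set (q @ [M]) = insert M (set q)" by simp
    ultimately show ?thesis using sorted_list_of_set_snoc[of "set q" M] that(2) by (metis finite_set)
  qed
  have dp: "distinct p" and zp: "0 \<notin> set p" using x by auto
  show ?thesis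
  proof (cases "v = M")
    case True
    have "word_equiv c (p @ [v]) (sorted_list_of_set (set p) @ [v])"
      using word_equiv_append[OF IH[OF refl dp zp x(3)], of "[]" "[v]"] x(1) by simp
    then show ?thesis using sorted_snoc[of p] x(1) True by simp
  next
    case False
    have "M \<in> set (p @ [v])" unfolding M_def by (intro Max_in) auto
    then have "v < M" "M \<in> set p" using False M_max by auto
    then obtain r' where e: "word_equiv c (p @ [v]) (r' @ [M])" and sr': "squished c k r'"
      using word_equiv_max_to_end[OF IH x] len M_max by auto
    have r': "distinct (r' @ [M])" "set (r' @ [M]) = set (p @ [v])" "length r' = length p"
      using word_equiv_invariants[OF e] x(1) by auto
    then have "0 \<notin> set r'" using x(2) by (metis Un_iff set_append)
    then have "word_equiv c r' (sorted_list_of_set (set r'))" using IH r' sr' by simp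
    then have "word_equiv c (r' @ [M]) (sorted_list_of_set (set r') @ [M])"
      using word_equiv_append[of c r' _ "[]" "[M]"] r'(1) by simp
    then show ?thesis using e sorted_snoc[OF r'(1,2)] by (simp add: rtranclp_trans)
  qed
qed

lemma least_squish_index:
  fixes c n :: nat
  assumes c: "1 \<le> c" and n: "c + 2 \<le> n"
  obtains k' where "1 \<le> k'" "c * (k' - 1) + 2 \<le> n" "n \<le> c * k' + 1" "k' + c \<le> n"
proof -
  define k' where "k' = (n - 2) div c + 1"
  have "k' - 1 = (n - 2) div c" by (simp add: k'_def)
  then have "c * (k' - 1) \<le> n - 2" by (simp only: times_div_less_eq_dividend)
  then have low: "c * (k' - 1) + 2 \<le> n" using n by linarith
  have high: "n \<le> c * k' + 1"
  proof -
    have "(n - 2) div c * c + (n - 2) mod c = n - 2" by (rule div_mult_mod_eq)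
    moreover have "(n - 2) mod c < c" using c by simp
    moreover have "c * k' = (n - 2) div c * c + c" by (simp add: k'_def)
    ultimately show ?thesis using n by linarith
  qed
  have sum: "k' + c \<le> n"
  proof (cases "k' = 1")
    case False
    then have "(c - 1) * 1 \<le> (c - 1) * (k' - 1)" by (intro mult_le_mono2) (simp add: k'_def)
    moreover have "(c - 1) * (k' - 1) + (k' - 1) = c * (k' - 1)" using c by (cases c) auto
    ultimately show ?thesis using low by linarith
  qed (use n in simp)
  moreover have "1 \<le> k'" by (simp add: k'_def)
  ultimately show thesis using that low high by blast
qed

lemma word_equiv_sorted:
  assumes "distinct x" "0 \<notin> set x" "squished c k x" "1 \<le> k"
    "c + 1 \<le> length x" "length x \<le> c * k + 1"
  shows "word_equiv c x (sorted_list_of_set (set x))"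
  using assms
proof (induction "length x" arbitrary: x k rule: less_induct)
  case less
  note dx = less.prems(1) and zx = less.prems(2) and sx = less.prems(3)
  define n where "n = length x"
  show ?case
  proof (cases "n = c + 1")
    case True
    have "x \<noteq> []" using True n_def by auto
    then have "hd x = 1" using squished_mono[OF sx less.prems(4)] squished_1_iff by metis
    then have "\<forall>z\<in>set x. hd x \<le> z" using zx by (metis not_le less_one)
    then show ?thesis using move_to_sorted dx True n_def by auto
  next
    case False
    then have n2: "c + 2 \<le> n" using less.prems(5) n_def by simp
    then have c: "1 \<le> c" using less.prems(6) n_def by (cases c) auto
    obtain k' where k': "1 \<le> k'" "c * (k' - 1) + 2 \<le> n" "n \<le> c * k' + 1" "k' + c \<le> n"
      using least_squish_index[OF c n2] .
    have "k' \<le> k"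
    proof (rule ccontr)
      assume "\<not> k' \<le> k"
      then have "c * k \<le> c * (k' - 1)" by (intro mult_le_mono2) simp
      then show False using k'(2) less.prems(6) n_def by linarith
    qed
    then have sx': "squished c k' x" using squished_mono[OF sx] by simp
    have xn: "x \<noteq> []" using n2 n_def by auto
    then obtain p v where x: "x = p @ [v]" by (metis append_butlast_last_id)
    have vk: "k' < v"
      using squished_last_gt[OF sx' dx zx xn _ c] k'(2) n_def x by simp
    have sp: "squished c k' p" using squished_butlast sx' vk x by simp
    have IH: "word_equiv c y (sorted_list_of_set (set y))"
      if "length y = length p" "distinct y" "0 \<notin> set y" "squished c k' y" for y
      using less.hyps[of y k'] that x n_def n2 k' by simp
    show ?thesis
      using word_equiv_sorted_step[of p c k' v] IH dx zx sp vk c k'(4) k'(3) x n_def by simp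
  qed
qed

section \<open>Counting equivalence classes\<close>

definition class_of :: "('a \<Rightarrow> 'a \<Rightarrow> bool) \<Rightarrow> 'a \<Rightarrow> 'a set" where
  "class_of R x = {y. R x y}"

definition closed_under :: "('a \<Rightarrow> 'a \<Rightarrow> bool) \<Rightarrow> 'a set \<Rightarrow> bool" where
  "closed_under R S \<longleftrightarrow> (\<forall>x\<in>S. \<forall>y. R x y \<longrightarrow> y \<in> S)"

lemma card_classes_bij_betw:
  assumes h: "bij_betw h S T" and R: "\<forall>x\<in>S. \<forall>y\<in>S. R1 x y \<longleftrightarrow> R2 (h x) (h y)"
    and S: "closed_under R1 S" and T: "closed_under R2 T"
  shows "card (class_of R1 ` S) = card (class_of R2 ` T)"
proof -
  have image_class: "class_of R2 (h x) = h ` class_of R1 x" if x: "x \<in> S" for x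
  proof
    show "class_of R2 (h x) \<subseteq> h ` class_of R1 x"
    proof
      fix y assume "y \<in> class_of R2 (h x)"
      then have r: "R2 (h x) y" by (simp add: class_of_def)
      have "h x \<in> T" using h x by (auto simp: bij_betw_def)
      then have "y \<in> T" using T r by (auto simp: closed_under_def)
      then obtain x' where x': "x' \<in> S" "y = h x'" using h by (auto simp: bij_betw_def)
      then have "R1 x x'" using R x r by auto
      then show "y \<in> h ` class_of R1 x" using x' by (auto simp: class_of_def)
    qed
  next
    show "h ` class_of R1 x \<subseteq> class_of R2 (h x)"
    proof
      fix y assume "y \<in> h ` class_of R1 x"
      then obtain x' where x': "R1 x x'" "y = h x'" by (auto simp: class_of_def)
      then have "x' \<in> S" using S x by (auto simp: closed_under_def)
      then show "y \<in> class_of R2 (h x)" using R x x' by (auto simp: class_of_def)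
    qed
  qed
  have "class_of R2 ` T = image h ` (class_of R1 ` S)"
    using h image_class by (auto simp: bij_betw_def image_iff)
  moreover have "inj_on (image h) (class_of R1 ` S)"
  proof (rule inj_on_subset)
    show "inj_on (image h) (Pow S)" using h by (simp add: bij_betw_def inj_on_image_Pow)
    show "class_of R1 ` S \<subseteq> Pow S" using S by (auto simp: closed_under_def class_of_def)
  qed
  ultimately show ?thesis by (simp add: card_image)
qed

lemma card_classes_product:
  assumes "reflp R1" "reflp R2"
  shows "card (class_of (\<lambda>(a, b) (a', b'). R1 a a' \<and> R2 b b') ` (P \<times> Q)) =
         card (class_of R1 ` P) * card (class_of R2 ` Q)"
proof -
  have pair_class: "class_of (\<lambda>(a, b) (a', b'). R1 a a' \<and> R2 b b') (a, b) =
      class_of R1 a \<times> class_of R2 b" for a b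
    by (auto simp: class_of_def)
  have "class_of (\<lambda>(a, b) (a', b'). R1 a a' \<and> R2 b b') ` (P \<times> Q) =
        (\<lambda>(C, D). C \<times> D) ` (class_of R1 ` P \<times> class_of R2 ` Q)"
    by (force simp: pair_class image_iff)
  moreover have "inj_on (\<lambda>(C, D). C \<times> D) (class_of R1 ` P \<times> class_of R2 ` Q)"
  proof (rule inj_onI, clarify)
    fix a b a' b'
    assume "class_of R1 a \<times> class_of R2 b = class_of R1 a' \<times> class_of R2 b'"
    moreover have "class_of R1 a \<noteq> {}" "class_of R2 b \<noteq> {}"
      using assms by (auto simp: class_of_def reflp_def)
    ultimately show "class_of R1 a = class_of R1 a' \<and> class_of R2 b = class_of R2 b'"
      by (simp add: times_eq_iff)
  qed
  ultimately show ?thesis by (simp add: card_image card_cartesian_product)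
qed

lemma classes_disjoint:
  assumes "closed_under R T" "reflp R" "S \<inter> T = {}"
  shows "class_of R ` S \<inter> class_of R ` T = {}"
proof (rule ccontr)
  assume "class_of R ` S \<inter> class_of R ` T \<noteq> {}"
  then obtain x y where xy: "x \<in> S" "y \<in> T" "class_of R x = class_of R y" by auto
  then have "x \<in> class_of R y" using assms(2) by (auto simp: class_of_def reflp_def)
  then have "x \<in> T" using assms(1) xy(2) by (auto simp: closed_under_def class_of_def)
  then show False using assms(3) xy(1) by auto
qed

lemma card_classes_UN_disjoint:
  assumes "finite I" "\<forall>i\<in>I. finite (S i)" "\<forall>i\<in>I. closed_under R (S i)"
    "\<forall>i\<in>I. \<forall>j\<in>I. i \<noteq> j \<longrightarrow> S i \<inter> S j = {}" "reflp R"
  shows "card (class_of R ` (\<Union>i\<in>I. S i)) = (\<Sum>i\<in>I. card (class_of R ` S i))"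
proof -
  have "card (\<Union>i\<in>I. class_of R ` S i) = (\<Sum>i\<in>I. card (class_of R ` S i))"
  proof (rule card_UN_disjoint)
    show "\<forall>i\<in>I. \<forall>j\<in>I. i \<noteq> j \<longrightarrow> class_of R ` S i \<inter> class_of R ` S j = {}"
      using assms(3-5) classes_disjoint by metis
  qed (use assms(1,2) in simp_all)
  then show ?thesis by (simp add: image_UN)
qed

lemma card_classes_Diff:
  assumes "finite S" "closed_under R S" "closed_under R T" "T \<subseteq> S" "reflp R" "symp R"
  shows "card (class_of R ` S) = card (class_of R ` T) + card (class_of R ` (S - T))"
proof -
  have "closed_under R (S - T)"
    using assms(2,3,6) unfolding closed_under_def symp_def by blast
  then have "class_of R ` T \<inter> class_of R ` (S - T) = {}"
    using classes_disjoint[OF _ assms(5), of "S - T" T] by (simp add: Int_Diff)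
  moreover have "class_of R ` S = class_of R ` T \<union> class_of R ` (S - T)"
    using assms(4) by blast
  moreover have "finite T" using assms(1,4) finite_subset by blast
  ultimately show ?thesis using assms(1) by (simp add: card_Un_disjoint)
qed

section \<open>Classes of squished permutations\<close>

definition squished_perms :: "nat \<Rightarrow> nat \<Rightarrow> nat \<Rightarrow> nat list set" where
  "squished_perms c k n = {x \<in> perms n. squished c k x}"

lemma perms_eq_permutations_of_set: "perms n = permutations_of_set {1..n}"
  by (auto simp: perms_def permutations_of_set_def)

lemma length_perms: "x \<in> perms n \<Longrightarrow> length x = n"
  by (auto simp: perms_def dest: distinct_card)

lemma word_equiv_perms: "x \<in> perms n \<Longrightarrow> word_equiv c x y \<Longrightarrow> y \<in> perms n"
  using word_equiv_invariants[of c x y] by (auto simp: perms_def)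

lemma reflp_word_equiv: "reflp (word_equiv c)"
  by (simp add: reflpI)

lemma symp_word_equiv: "symp (word_equiv c)"
  by (auto intro: sympI word_equiv_sym)

text \<open>Inside \<open>perms n\<close> the restriction in \<open>requiv\<close> is automatic, since moves preserve
  the set of letters.\<close>
lemma requiv_iff_word_equiv:
  assumes x: "x \<in> perms n"
  shows "(x, y) \<in> requiv c n \<longleftrightarrow> word_equiv c x y"
proof
  assume "(x, y) \<in> requiv c n"
  then have "(\<lambda>x y. x \<in> perms n \<and> y \<in> perms n \<and> rstep c x y)\<^sup>*\<^sup>* x y"
    by (simp add: requiv_def)
  then show "word_equiv c x y"
  proof (induction rule: rtranclp_induct)
    case (step y z)
    then have "move c y z" by (auto simp: move_def perms_def)
    with step.IH show ?case by (rule rtranclp.rtrancl_into_rtrancl)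
  qed simp
next
  assume e: "word_equiv c x y"
  then have "(\<lambda>x y. x \<in> perms n \<and> y \<in> perms n \<and> rstep c x y)\<^sup>*\<^sup>* x y"
  proof (induction rule: rtranclp_induct)
    case (step y z)
    have y: "y \<in> perms n" using word_equiv_perms[OF x step.hyps(1)] .
    then have "z \<in> perms n" using word_equiv_perms[OF _ r_into_rtranclp[of "move c", OF step.hyps(2)]] by blast
    moreover have "rstep c y z" using step.hyps(2) by (simp add: move_def)
    ultimately show ?case using step.IH y by (simp add: rtranclp.rtrancl_into_rtrancl)
  qed simp
  then show "(x, y) \<in> requiv c n" using x word_equiv_perms[OF x e] by (simp add: requiv_def)
qed

lemma closed_under_squished_perms: "closed_under (word_equiv c) (squished_perms c k n)"
  unfolding closed_under_def squished_perms_def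
proof (intro ballI allI impI)
  fix x y assume x: "x \<in> {x \<in> perms n. squished c k x}" and e: "word_equiv c x y"
  have "0 \<notin> set x" using x by (auto simp: perms_def)
  then show "y \<in> {x \<in> perms n. squished c k x}"
    using x word_equiv_perms[OF _ e] word_equiv_squished[OF e] by auto
qed

lemma finite_squished_perms: "finite (squished_perms c k n)"
  by (simp add: squished_perms_def perms_eq_permutations_of_set)

lemma gcount_eq_card_classes: "gcount c k n = card (class_of (word_equiv c) ` squished_perms c k n)"
proof -
  have quot: "perms n // requiv c n = class_of (word_equiv c) ` perms n"
  proof -
    have "requiv c n `` {x} = class_of (word_equiv c) x" if "x \<in> perms n" for x
      using requiv_iff_word_equiv[OF that] by (auto simp: class_of_def)
    then show ?thesis unfolding quotient_def by auto
  qed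
  have "{C \<in> perms n // requiv c n. \<exists>phi\<in>C. squished c k phi} =
      class_of (word_equiv c) ` squished_perms c k n"
  proof
    show "{C \<in> perms n // requiv c n. \<exists>phi\<in>C. squished c k phi} \<subseteq>
        class_of (word_equiv c) ` squished_perms c k n"
    proof
      fix C assume "C \<in> {C \<in> perms n // requiv c n. \<exists>phi\<in>C. squished c k phi}"
      then obtain x phi where x: "x \<in> perms n" "C = class_of (word_equiv c) x" "phi \<in> C"
          "squished c k phi"
        unfolding quot by auto
      have e: "word_equiv c x phi" using x by (simp add: class_of_def)
      have "phi \<in> squished_perms c k n"
        using word_equiv_perms[OF x(1) e] x(4) by (simp add: squished_perms_def)
      moreover have "C = class_of (word_equiv c) phi"
        using x(2) e word_equiv_sym by (auto simp: class_of_def intro: rtranclp_trans)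
      ultimately show "C \<in> class_of (word_equiv c) ` squished_perms c k n" by blast
    qed
    show "class_of (word_equiv c) ` squished_perms c k n \<subseteq>
        {C \<in> perms n // requiv c n. \<exists>phi\<in>C. squished c k phi}"
      unfolding quot squished_perms_def by (auto simp: class_of_def)
  qed
  then show ?thesis unfolding gcount_def by simp
qed

lemma card_perms_hd_1:
  assumes n: "1 \<le> n"
  shows "card {x \<in> perms n. hd x = 1} = fact (n - 1)"
proof -
  have "{x \<in> perms n. hd x = 1} = (Cons 1) ` permutations_of_set {2..n}"
  proof
    show "{x \<in> perms n. hd x = 1} \<subseteq> (Cons 1) ` permutations_of_set {2..n}"
    proof
      fix x assume x: "x \<in> {x \<in> perms n. hd x = 1}"
      have dx: "distinct x" and sx: "set x = {1..n}" and hx: "hd x = 1"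
        using x by (simp_all add: perms_def)
      have xe: "x = 1 # tl x" using sx n hx by (metis list.collapse list.set(1) atLeastatMost_empty_iff2
          empty_not_insert insert_absorb not_one_le_zero)
      have "set (tl x) = {2..n}"
      proof -
        have "set x = insert 1 (set (tl x))" using xe by (metis list.simps(15))
        moreover have "1 \<notin> set (tl x)" using xe dx by (metis distinct.simps(2))
        ultimately have "set (tl x) = set x - {1}" by auto
        moreover have "{1..n} - {1} = {2..(n::nat)}" by auto
        ultimately show ?thesis using sx by simp
      qed
      then have "tl x \<in> permutations_of_set {2..n}"
        using dx by (simp add: permutations_of_set_def distinct_tl)
      then show "x \<in> (Cons 1) ` permutations_of_set {2..n}" using xe by blast
    qed
    show "(Cons 1) ` permutations_of_set {2..n} \<subseteq> {x \<in> perms n. hd x = 1}"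
      using n by (auto simp: permutations_of_set_def perms_def)
  qed
  then show ?thesis by (simp add: card_image)
qed

text \<open>Words shorter than a window admit no move, and a \<open>k\<close>-squished word of length at most
  \<open>c\<close> is just one starting with \<open>1\<close>.\<close>
lemma gcount_short:
  assumes n: "1 \<le> n" "n < c + 1" and k: "1 \<le> k"
  shows "gcount c k n = fact (n - 1)"
proof -
  have "class_of (word_equiv c) x = {x}" if "x \<in> perms n" for x
    using word_equiv_short[of c x] length_perms[OF that] n by (auto simp: class_of_def)
  then have "class_of (word_equiv c) ` squished_perms c k n = (\<lambda>x. {x}) ` squished_perms c k n"
    by (auto simp: squished_perms_def image_iff)
  then have "gcount c k n = card (squished_perms c k n)"
    unfolding gcount_eq_card_classes by (simp add: card_image)
  moreover have "squished c k x \<longleftrightarrow> hd x = 1" if x: "x \<in> perms n" for x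
  proof
    have lx: "length x = n" using length_perms[OF x] .
    show "squished c k x \<Longrightarrow> hd x = 1"
      using squished_mono[of c k x 1] squished_1_iff[of c x] k n lx by auto
    assume h: "hd x = 1"
    show "squished c k x" unfolding squished_iff_nth
    proof (intro allI impI)
      fix j assume j: "1 \<le> j \<and> j \<le> k \<and> j \<le> length x"
      show "\<exists>i<length x. i \<le> c * (j - 1) \<and> x ! i = j"
      proof (cases "j = 1")
        case True
        have "x \<noteq> []" using lx n by auto
        then show ?thesis using h True by (intro exI[of _ 0]) (simp add: hd_conv_nth)
      next
        case False
        have "j \<in> set x" using x j lx by (auto simp: perms_def)
        then obtain i where i: "i < length x" "x ! i = j" by (metis in_set_conv_nth)
        have "1 \<le> j - 1" using False j by linarith
        then have "c * 1 \<le> c * (j - 1)" by (rule mult_le_mono2)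
        then have "i \<le> c * (j - 1)" using i lx n by linarith
        then show ?thesis using i by blast
      qed
    qed
  qed
  then have "squished_perms c k n = {x \<in> perms n. hd x = 1}" by (auto simp: squished_perms_def)
  ultimately show ?thesis using card_perms_hd_1[OF n(1)] by simp
qed

lemma gcount_middle:
  assumes c: "1 \<le> c" and n: "c + 1 \<le> n" "n \<le> c * k + 1" and k: "1 \<le> k"
  shows "gcount c k n = 1"
proof -
  define I where "I = [1..<n+1]"
  have "class_of (word_equiv c) x = class_of (word_equiv c) I" if x: "x \<in> squished_perms c k n" for x
  proof -
    have xp: "distinct x" "set x = {1..n}" "squished c k x"
      using x by (auto simp: squished_perms_def perms_def)
    have "sorted_list_of_set (set x) = I"
      using xp by (simp add: I_def atLeastLessThanSuc_atLeastAtMost[symmetric])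
    moreover have "word_equiv c x (sorted_list_of_set (set x))"
      using word_equiv_sorted[OF xp(1) _ xp(3) k] xp n length_perms[of x n]
      by (simp add: perms_def)
    ultimately have "word_equiv c x I" by simp
    then show ?thesis using word_equiv_sym by (auto simp: class_of_def intro: rtranclp_trans)
  qed
  moreover have "I \<in> squished_perms c k n"
    using squished_upt[OF c] by (simp add: squished_perms_def perms_def I_def
        atLeastLessThanSuc_atLeastAtMost del: upt_Suc)
  ultimately have "class_of (word_equiv c) ` squished_perms c k n = {class_of (word_equiv c) I}"
    by blast
  then show ?thesis unfolding gcount_eq_card_classes by simp
qed

section \<open>Relabelling\<close>

lemma strict_mono_on_inv_into:
  fixes f :: "nat \<Rightarrow> nat"
  assumes f: "strict_mono_on D f"
  shows "strict_mono_on (f ` D) (inv_into D f)"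
proof (rule strict_mono_onI)
  fix r s assume rs: "r \<in> f ` D" "s \<in> f ` D" "r < s"
  then obtain x y where xy: "x \<in> D" "y \<in> D" "r = f x" "s = f y" by auto
  have "x < y"
  proof (rule ccontr)
    assume "\<not> x < y"
    then have "f y \<le> f x" using strict_mono_on_leD[OF f xy(2) xy(1)] by simp
    then show False using rs xy by simp
  qed
  then show "inv_into D f r < inv_into D f s"
    using xy strict_mono_on_imp_inj_on[OF f] by (simp add: inv_into_f_f)
qed

lemma card_classes_map_strict_mono:
  fixes f :: "nat \<Rightarrow> nat"
  assumes f: "strict_mono_on D f" and SD: "\<forall>x\<in>S. set x \<subseteq> D"
    and S: "closed_under (word_equiv c) S" and fS: "closed_under (word_equiv c) (map f ` S)"
  shows "card (class_of (word_equiv c) ` S) = card (class_of (word_equiv c) ` (map f ` S))"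
proof (rule card_classes_bij_betw[OF _ _ S fS])
  have inj: "inj_on f D" using f by (rule strict_mono_on_imp_inj_on)
  define g where "g = inv_into D f"
  have gf: "map g (map f z) = z" if "set z \<subseteq> D" for z
    using that inj by (induction z) (auto simp: g_def inv_into_f_f)
  show "bij_betw (map f) S (map f ` S)"
    using SD gf by (intro inj_on_imp_bij_betw inj_onI) metis
  show "\<forall>x\<in>S. \<forall>y\<in>S. word_equiv c x y \<longleftrightarrow> word_equiv c (map f x) (map f y)"
  proof (intro ballI iffI)
    fix x y assume "x \<in> S" "y \<in> S" "word_equiv c x y"
    then show "word_equiv c (map f x) (map f y)" using word_equiv_map_strict_mono[OF f] SD by blast
  next
    fix x y assume xy: "x \<in> S" "y \<in> S" and e: "word_equiv c (map f x) (map f y)"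
    have "set (map f x) \<subseteq> f ` D" using SD xy by auto
    then have "word_equiv c (map g (map f x)) (map g (map f y))"
      using word_equiv_map_strict_mono[OF strict_mono_on_inv_into[OF f] e] by (simp add: g_def)
    then show "word_equiv c x y" using SD xy gf by simp
  qed
qed

text \<open>\<open>enum_set A i\<close> is the \<open>i\<close>-th smallest element of \<open>A\<close>, counting from \<open>1\<close>; so \<open>map (enum_set A)\<close>
  turns a permutation in \<open>perms\<close> into a word with the same pattern on the letters of \<open>A\<close>.\<close>
definition enum_set :: "nat set \<Rightarrow> nat \<Rightarrow> nat" where
  "enum_set A i = sorted_list_of_set A ! (i - 1)"

lemma strict_mono_on_enum_set: "finite A \<Longrightarrow> strict_mono_on {1..card A} (enum_set A)"
proof (rule strict_mono_onI)
  fix r s assume A: "finite A" and rs: "r \<in> {1..card A}" "s \<in> {1..card A}" "r < s"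
  have "sorted_wrt (<) (sorted_list_of_set A)" by (simp add: strict_sorted_list_of_set)
  moreover have "r - 1 < s - 1" "s - 1 < length (sorted_list_of_set A)" using rs A by auto
  ultimately show "enum_set A r < enum_set A s" unfolding enum_set_def by (rule sorted_wrt_nth_less)
qed

lemma enum_set_image: "finite A \<Longrightarrow> enum_set A ` {1..card A} = A"
proof
  assume A: "finite A"
  show "enum_set A ` {1..card A} \<subseteq> A"
  proof
    fix a assume "a \<in> enum_set A ` {1..card A}"
    then obtain i where i: "i \<in> {1..card A}" "a = enum_set A i" by auto
    then have "i - 1 < length (sorted_list_of_set A)" using A by auto
    then show "a \<in> A" using i A unfolding enum_set_def by (metis nth_mem set_sorted_list_of_set)
  qed
  show "A \<subseteq> enum_set A ` {1..card A}"
  proof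
    fix a assume "a \<in> A"
    then have "a \<in> set (sorted_list_of_set A)" using A by simp
    then obtain t where t: "t < length (sorted_list_of_set A)" "sorted_list_of_set A ! t = a"
      by (metis in_set_conv_nth)
    then have "t + 1 \<in> {1..card A}" "enum_set A (t + 1) = a" using A by (auto simp: enum_set_def)
    then show "a \<in> enum_set A ` {1..card A}" by (metis imageI)
  qed
qed

lemma enum_set_1: "finite A \<Longrightarrow> A \<noteq> {} \<Longrightarrow> enum_set A 1 = Min A"
  by (simp add: enum_set_def sorted_list_of_set_nonempty)

lemma enum_set_initial:
  assumes A: "finite A" "0 \<notin> A" "{1..k} \<subseteq> A" and i: "1 \<le> i" "i \<le> k"
  shows "enum_set A i = i"
proof -
  have "sorted_wrt (<) ([1..<k+1] @ sorted_list_of_set (A - {1..k}))"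
    using A by (auto simp: sorted_wrt_append strict_sorted_list_of_set not_le simp del: upt_Suc)
  moreover have "set ([1..<k+1] @ sorted_list_of_set (A - {1..k})) = A"
    using A by auto
  ultimately have "sorted_list_of_set A = [1..<k+1] @ sorted_list_of_set (A - {1..k})"
    by (metis sorted_list_of_set.idem_if_sorted_distinct strict_sorted_iff)
  moreover have "i - 1 < length [1..<k+1]" using i by (simp only: length_upt)
  ultimately have "enum_set A i = [1..<k+1] ! (i - 1)" by (simp add: enum_set_def nth_append del: upt_Suc)
  also have "\<dots> = i" using i by (subst nth_upt) auto
  finally show ?thesis .
qed

lemma map_enum_set_perms:
  assumes A: "finite A"
  shows "map (enum_set A) ` {x \<in> perms (card A). P (map (enum_set A) x)} =
    {p. distinct p \<and> set p = A \<and> P p}"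
proof
  define f where "f = enum_set A"
  define D where "D = {1..card A}"
  have inj: "inj_on f D" using strict_mono_on_enum_set[OF A] strict_mono_on_imp_inj_on
    by (simp add: f_def D_def)
  have fD: "f ` D = A" using enum_set_image[OF A] by (simp add: f_def D_def)
  show "map (enum_set A) ` {x \<in> perms (card A). P (map (enum_set A) x)} \<subseteq>
      {p. distinct p \<and> set p = A \<and> P p}"
    using inj fD by (auto simp: perms_def f_def D_def distinct_map)
  show "{p. distinct p \<and> set p = A \<and> P p} \<subseteq>
      map (enum_set A) ` {x \<in> perms (card A). P (map (enum_set A) x)}"
  proof
    fix p assume p: "p \<in> {p. distinct p \<and> set p = A \<and> P p}"
    define x where "x = map (inv_into D f) p"
    have fx: "map f x = p" using p fD by (auto simp: x_def f_inv_into_f intro: map_idI)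
    have "set x = inv_into D f ` f ` D" using p fD by (simp add: x_def)
    then have "set x = D" using inj by simp
    moreover have "distinct x" using fx p by (metis distinct_map mem_Collect_eq)
    ultimately have "x \<in> {x \<in> perms (card A). P (map (enum_set A) x)}"
      using fx p by (simp add: perms_def D_def f_def)
    then show "p \<in> map (enum_set A) ` {x \<in> perms (card A). P (map (enum_set A) x)}"
      using fx by (auto simp: f_def)
  qed
qed

definition squished_words :: "nat \<Rightarrow> nat \<Rightarrow> nat set \<Rightarrow> nat list set" where
  "squished_words c k A = {p. distinct p \<and> set p = A \<and> squished c k p}"

definition headed_words :: "nat \<Rightarrow> nat set \<Rightarrow> nat list set" where
  "headed_words h B = {q. distinct q \<and> set q = insert h B \<and> hd q = h}"

lemma closed_under_squished_words: "0 \<notin> A \<Longrightarrow> closed_under (word_equiv c) (squished_words c k A)"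
  unfolding closed_under_def squished_words_def using word_equiv_invariants word_equiv_squished by blast

lemma closed_under_headed_words: "closed_under (word_equiv c) (headed_words h B)"
  unfolding closed_under_def headed_words_def
proof (intro ballI allI impI)
  fix x y assume x: "x \<in> {q. distinct q \<and> set q = insert h B \<and> hd q = h}" and e: "word_equiv c x y"
  then show "y \<in> {q. distinct q \<and> set q = insert h B \<and> hd q = h}"
    using word_equiv_invariants[OF e] word_equiv_hd[OF e] by simp
qed

lemma card_classes_squished_words:
  assumes A: "finite A" "0 \<notin> A" "{1..k} \<subseteq> A" and k: "k \<le> card A"
  shows "card (class_of (word_equiv c) ` squished_words c k A) = gcount c k (card A)"
proof -
  define f where "f = enum_set A"
  have f: "strict_mono_on {1..card A} f" unfolding f_def by (rule strict_mono_on_enum_set[OF A(1)])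
  have "f i = j \<longleftrightarrow> i = j" if "i \<in> {1..card A}" "j \<in> {1..k}" for i j
  proof -
    have "f j = j" using enum_set_initial[OF A] that(2) by (simp add: f_def)
    moreover have "j \<in> {1..card A}" using that(2) k by simp
    ultimately show ?thesis using strict_mono_on_imp_inj_on[OF f] that(1) by (metis inj_on_eq_iff)
  qed
  then have "{x \<in> perms (card A). squished c k (map f x)} = squished_perms c k (card A)"
    using squished_map[of _ k f c] by (auto simp: squished_perms_def perms_def)
  then have img: "map f ` squished_perms c k (card A) = squished_words c k A"
    using map_enum_set_perms[OF A(1), of "squished c k"] by (simp add: f_def squished_words_def)
  have "gcount c k (card A) = card (class_of (word_equiv c) ` map f ` squished_perms c k (card A))"
    unfolding gcount_eq_card_classes
    by (rule card_classes_map_strict_mono[OF f _ closed_under_squished_perms])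
      (use img closed_under_squished_words[OF A(2)] in \<open>auto simp: squished_perms_def perms_def\<close>)
  then show ?thesis using img by simp
qed

lemma card_classes_headed_words:
  assumes B: "finite B" "\<forall>b\<in>B. h < b"
  shows "card (class_of (word_equiv c) ` headed_words h B) = gcount c 1 (card B + 1)"
proof -
  define A where "A = insert h B"
  define f where "f = enum_set A"
  have A: "finite A" "card A = card B + 1" using B by (auto simp: A_def)
  have f: "strict_mono_on {1..card A} f" unfolding f_def by (rule strict_mono_on_enum_set[OF A(1)])
  have "f 1 = h" using enum_set_1[OF A(1)] B by (simp add: f_def A_def Min_insert2 less_imp_le)
  then have "hd (map f x) = h \<longleftrightarrow> squished c 1 x" if "x \<in> perms (card A)" for x
  proof -
    have sx: "set x = {1..card A}" using that by (simp add: perms_def)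
    moreover have one: "1 \<in> {1..card A}" using A(2) by simp
    ultimately have "x \<noteq> []" by auto
    then have "hd x \<in> {1..card A}" using sx hd_in_set by blast
    then have "f (hd x) = f 1 \<longleftrightarrow> hd x = 1"
      using inj_on_eq_iff[OF strict_mono_on_imp_inj_on[OF f]] one by blast
    moreover have "hd (map f x) = f (hd x)" using \<open>x \<noteq> []\<close> by (rule hd_map)
    moreover have "squished c 1 x \<longleftrightarrow> hd x = 1" using squished_1_iff \<open>x \<noteq> []\<close> by blast
    ultimately show ?thesis using \<open>f 1 = h\<close> by simp
  qed
  then have "{x \<in> perms (card A). hd (map f x) = h} = squished_perms c 1 (card A)"
    by (auto simp: squished_perms_def)
  then have img: "map f ` squished_perms c 1 (card A) = headed_words h B"
    using map_enum_set_perms[OF A(1), of "\<lambda>q. hd q = h"] by (simp add: f_def headed_words_def A_def)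
  have "gcount c 1 (card A) = card (class_of (word_equiv c) ` map f ` squished_perms c 1 (card A))"
    unfolding gcount_eq_card_classes
    by (rule card_classes_map_strict_mono[OF f _ closed_under_squished_perms])
      (use img closed_under_headed_words in \<open>auto simp: squished_perms_def perms_def\<close>)
  then show ?thesis using img A(2) by simp
qed

section \<open>Splitting at the letter k + 1\<close>

lemma move_across_barrier:
  assumes m: "move c (p @ q) y" and qn: "q \<noteq> []"
    and h: "\<forall>i. length p - c \<le> i \<longrightarrow> i < length p \<longrightarrow> hd q < p!i"
  shows "\<exists>p' q'. y = p' @ q' \<and> length p' = length p \<and>
           ((move c p p' \<and> q' = q) \<or> (p' = p \<and> move c q q'))"
proof -
  from m obtain a u v b where x: "p @ q = a @ u @ b" and y: "y = a @ v @ b" and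
    lu: "length u = c + 1" and lv: "length v = c + 1" and
    hu: "\<forall>z\<in>set u. hd u \<le> z" and hv: "\<forall>z\<in>set v. hd v \<le> z" and suv: "set u = set v"
    and dx: "distinct (p @ q)" and dy: "distinct y"
    by (rule moveE)
  have dp: "distinct p" and dq: "distinct q" using dx by auto
  consider (left) "length a + length u \<le> length p" | (right) "length p \<le> length a"
    | (straddle) "length a < length p" "length p < length a + length u"
    by linarith
  then show ?thesis
  proof cases
    case left
    define ws where "ws = take (length p - length a - length u) b"
    have p: "p = a @ u @ ws" and q: "q = drop (length p - length a - length u) b"
      using arg_cong[OF x, of "take (length p)"] arg_cong[OF x, of "drop (length p)"] left
      by (simp_all add: ws_def)
    then have y': "y = (a @ v @ ws) @ q" using y lu lv by (simp add: ws_def)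
    then have "move c p (a @ v @ ws)" using dp dy by (intro moveI[OF p refl lu lv hu hv suv]) auto
    moreover have "length (a @ v @ ws) = length p" using p lu lv by simp
    ultimately show ?thesis using y' by blast
  next
    case right
    define us where "us = drop (length p) a"
    have q: "q = us @ u @ b" and a: "a = p @ us"
      using arg_cong[OF x, of "drop (length p)"] arg_cong[OF x, of "take (length p)"] right
      by (simp_all add: us_def) (metis append_take_drop_id)
    then have y': "y = p @ (us @ v @ b)" using y by simp
    then have "move c q (us @ v @ b)" using dq dy by (intro moveI[OF q refl lu lv hu hv suv]) auto
    then show ?thesis using y' by auto
  next
    case straddle
    have "length p - c \<le> length a" using straddle lu by linarith
    then have "hd q < p ! length a" using h straddle by blast
    moreover have "p ! length a = hd u" using arg_cong[OF x, of "\<lambda>w. w ! length a"] straddle lu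
      by (cases u) (auto simp: nth_append)
    moreover have "hd q \<in> set u"
    proof -
      have t: "length p - length a < length u" using straddle by linarith
      have "hd q = (p @ q) ! length p" using qn by (simp add: hd_conv_nth nth_append)
      also have "\<dots> = u ! (length p - length a)" using x straddle t by (simp add: nth_append)
      finally show ?thesis using t by simp
    qed
    ultimately show ?thesis using hu by fastforce
  qed
qed

definition split_words :: "nat \<Rightarrow> nat \<Rightarrow> nat set \<Rightarrow> nat set \<Rightarrow> nat list set" where
  "split_words c k A B = (\<lambda>(p, q). p @ q) ` (squished_words c k A \<times> headed_words (k + 1) B)"

text \<open>By \<open>squished_suffix_gt\<close> the last \<open>c\<close> letters of the prefix exceed \<open>k + 1\<close>, so by
  \<open>move_across_barrier\<close> no window crosses the boundary and classes of \<open>p @ q\<close> are products.\<close>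
locale barrier_split =
  fixes c k :: nat and A B :: "nat set"
  assumes c: "1 \<le> c" and A: "finite A" "0 \<notin> A" "k + 1 \<notin> A" "c * k + 1 \<le> card A"
    and disj: "A \<inter> B = {}"
begin

lemma length_squished_words: "p \<in> squished_words c k A \<Longrightarrow> length p = card A"
  by (auto simp: squished_words_def distinct_card)

lemma word_equiv_split_words:
  assumes e: "word_equiv c (p @ q) z" and p: "p \<in> squished_words c k A" and q: "q \<in> headed_words (k + 1) B"
  obtains p' q' where "z = p' @ q'" "p' \<in> squished_words c k A" "q' \<in> headed_words (k + 1) B"
    "word_equiv c p p'" "word_equiv c q q'"
proof -
  have "\<exists>p' q'. z = p' @ q' \<and> p' \<in> squished_words c k A \<and> q' \<in> headed_words (k + 1) B \<and>
      word_equiv c p p' \<and> word_equiv c q q'"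
    using e
  proof (induction rule: rtranclp_induct)
    case base then show ?case using p q by blast
  next
    case (step y z)
    then obtain p' q' where pq: "y = p' @ q'" "p' \<in> squished_words c k A" "q' \<in> headed_words (k + 1) B"
      "word_equiv c p p'" "word_equiv c q q'"
      by blast
    have pd: "distinct p'" "set p' = A" "squished c k p'" using pq by (auto simp: squished_words_def)
    have qd: "q' \<noteq> []" "hd q' = k + 1" using pq by (auto simp: headed_words_def)
    have "\<forall>i. length p' - c \<le> i \<longrightarrow> i < length p' \<longrightarrow> hd q' < p' ! i"
      using squished_suffix_gt[OF pd(3,1)] pd A c qd length_squished_words[OF pq(2)] by simp
    then obtain p'' q'' where pq2: "z = p'' @ q''" "length p'' = length p'"
      "(move c p' p'' \<and> q'' = q') \<or> (p'' = p' \<and> move c q' q'')"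
      using move_across_barrier[of c p' q' z] step.hyps(2) pq(1) qd(1) by blast
    show ?case
    proof (cases "move c p' p'' \<and> q'' = q'")
      case True
      then have "p'' \<in> squished_words c k A"
        using closed_under_squished_words[OF A(2)] pq(2) unfolding closed_under_def by blast
      moreover have "word_equiv c p p''" using pq(4) True by (meson rtranclp.rtrancl_into_rtrancl)
      ultimately show ?thesis using pq2(1) pq(3,5) True by blast
    next
      case False
      then have "p'' = p'" "move c q' q''" using pq2(3) by auto
      moreover from this have "q'' \<in> headed_words (k + 1) B"
        using closed_under_headed_words pq(3) unfolding closed_under_def by blast
      moreover have "word_equiv c q q''" using pq(5) \<open>move c q' q''\<close> by (meson rtranclp.rtrancl_into_rtrancl)
      ultimately show ?thesis using pq2(1) pq(2,4) by blast
    qed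
  qed
  with that show thesis by blast
qed

lemma closed_under_split_words: "closed_under (word_equiv c) (split_words c k A B)"
  unfolding closed_under_def split_words_def
proof (clarify)
  fix p q z assume "p \<in> squished_words c k A" "q \<in> headed_words (k + 1) B" "word_equiv c (p @ q) z"
  then obtain p' q' where "z = p' @ q'" "p' \<in> squished_words c k A" "q' \<in> headed_words (k + 1) B"
    using word_equiv_split_words by metis
  then show "z \<in> (\<lambda>(p, q). p @ q) ` (squished_words c k A \<times> headed_words (k + 1) B)" by force
qed

lemma word_equiv_append_iff:
  assumes "p \<in> squished_words c k A" "q \<in> headed_words (k + 1) B"
    "p' \<in> squished_words c k A" "q' \<in> headed_words (k + 1) B"
  shows "word_equiv c (p @ q) (p' @ q') \<longleftrightarrow> word_equiv c p p' \<and> word_equiv c q q'"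
proof
  assume e: "word_equiv c p p' \<and> word_equiv c q q'"
  have "distinct (p @ q)" "distinct (p' @ q)"
    using assms disj A(3) by (auto simp: squished_words_def headed_words_def)
  then have "word_equiv c (p @ q) (p' @ q)" "word_equiv c (p' @ q) (p' @ q')"
    using word_equiv_append[of c p p' "[]" q] word_equiv_append[of c q q' p' "[]"] e by simp_all
  then show "word_equiv c (p @ q) (p' @ q')" by (rule rtranclp_trans)
next
  assume "word_equiv c (p @ q) (p' @ q')"
  then obtain p'' q'' where r: "p' @ q' = p'' @ q''" "p'' \<in> squished_words c k A"
    "word_equiv c p p''" "word_equiv c q q''"
    by (rule word_equiv_split_words[OF _ assms(1,2)])
  have "length p'' = length p'" using r(2) assms(3) length_squished_words by simp
  then show "word_equiv c p p' \<and> word_equiv c q q'" using r by auto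
qed

lemma card_classes_split_words:
  "card (class_of (word_equiv c) ` split_words c k A B) =
    card (class_of (word_equiv c) ` squished_words c k A) * card (class_of (word_equiv c) ` headed_words (k + 1) B)"
proof -
  define R where "R = (\<lambda>(p, q) (p', q'). word_equiv c p p' \<and> word_equiv c q q')"
  have "card (class_of R ` (squished_words c k A \<times> headed_words (k + 1) B)) =
      card (class_of (word_equiv c) ` split_words c k A B)"
  proof (rule card_classes_bij_betw[OF _ _ _ closed_under_split_words])
    show "bij_betw (\<lambda>(p, q). p @ q) (squished_words c k A \<times> headed_words (k + 1) B) (split_words c k A B)"
      unfolding split_words_def
    proof (rule inj_on_imp_bij_betw, rule inj_onI, clarify)
      fix p q p' q' assume "p \<in> squished_words c k A" "p' \<in> squished_words c k A"
        and e: "p @ q = p' @ q'"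
      then have "length p = length p'" using length_squished_words by simp
      then show "p = p' \<and> q = q'" using e by simp
    qed
    show "\<forall>x\<in>squished_words c k A \<times> headed_words (k + 1) B. \<forall>y\<in>squished_words c k A \<times> headed_words (k + 1) B.
        R x y \<longleftrightarrow> word_equiv c ((\<lambda>(p, q). p @ q) x) ((\<lambda>(p, q). p @ q) y)"
      using word_equiv_append_iff by (auto simp: R_def)
    show "closed_under R (squished_words c k A \<times> headed_words (k + 1) B)"
      using closed_under_squished_words[OF A(2)] closed_under_headed_words
      unfolding closed_under_def R_def by auto
  qed
  moreover have "card (class_of R ` (squished_words c k A \<times> headed_words (k + 1) B)) =
      card (class_of (word_equiv c) ` squished_words c k A) * card (class_of (word_equiv c) ` headed_words (k + 1) B)"
    unfolding R_def by (rule card_classes_product[OF reflp_word_equiv reflp_word_equiv])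
  ultimately show ?thesis by simp
qed

end

definition prefix_letters :: "nat \<Rightarrow> nat \<Rightarrow> nat set \<Rightarrow> nat set" where
  "prefix_letters n k B = {1..n} - insert (k + 1) B"

text \<open>\<open>(j, B) \<in> split_index c k n\<close>: the letter \<open>k + 1\<close> sits at position \<open>j\<close> (counting from \<open>1\<close>) and is
  followed by the letters \<open>B\<close>.\<close>
definition split_index :: "nat \<Rightarrow> nat \<Rightarrow> nat \<Rightarrow> (nat \<times> nat set) set" where
  "split_index c k n = Sigma {c * k + 2..n} (\<lambda>j. {B. B \<subseteq> {k + 2..n} \<and> card B = n - j})"

lemma split_index_facts:
  assumes c: "1 \<le> c" and jB: "(j, B) \<in> split_index c k n"
  shows "barrier_split c k (prefix_letters n k B) B" "card (prefix_letters n k B) = j - 1"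
    "{1..k} \<subseteq> prefix_letters n k B" "finite B" "\<forall>b\<in>B. k + 1 < b"
proof -
  have j: "c * k + 2 \<le> j" "j \<le> n" and B: "B \<subseteq> {k + 2..n}" "card B = n - j"
    using jB by (auto simp: split_index_def)
  show fB: "finite B" using B(1) finite_subset by blast
  show "\<forall>b\<in>B. k + 1 < b" using B(1) by auto
  have "k \<le> c * k" using c by simp
  then have "k + 1 \<le> n" using j by linarith
  then have sub: "insert (k + 1) B \<subseteq> {1..n}" using B(1) by auto
  have "k + 1 \<notin> B" using B(1) by auto
  then have "card (insert (k + 1) B) = n - j + 1" using fB B(2) by simp
  then show card: "card (prefix_letters n k B) = j - 1"
    using card_Diff_subset[OF finite_subset[OF sub] sub] j by (simp add: prefix_letters_def)
  show "{1..k} \<subseteq> prefix_letters n k B" using B(1) \<open>k + 1 \<le> n\<close> by (auto simp: prefix_letters_def)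
  show "barrier_split c k (prefix_letters n k B) B"
    using c card j by unfold_locales (auto simp: prefix_letters_def)
qed

lemma split_words_squished_perms:
  assumes c: "1 \<le> c" and jB: "(j, B) \<in> split_index c k n" and x: "x \<in> split_words c k (prefix_letters n k B) B"
  shows "x \<in> squished_perms c k n - squished_perms c (k + 1) n"
proof -
  obtain p q where x: "x = p @ q" and p: "p \<in> squished_words c k (prefix_letters n k B)"
    and q: "q \<in> headed_words (k + 1) B"
    using x by (auto simp: split_words_def)
  note facts = split_index_facts[OF c jB]
  have j: "c * k + 2 \<le> j" "j \<le> n" using jB by (auto simp: split_index_def)
  have dp: "distinct p" and sp: "set p = prefix_letters n k B" and sqp: "squished c k p"
    using p by (auto simp: squished_words_def)
  have dq: "distinct q" and sq: "set q = insert (k + 1) B" and hq: "hd q = k + 1"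
    using q by (auto simp: headed_words_def)
  have lp: "length p = j - 1" using dp sp facts(2) by (metis distinct_card)
  have "k \<le> c * k" using c by simp
  then have "k + 1 \<le> n" using j by linarith
  then have sub: "insert (k + 1) B \<subseteq> {1..n}" using jB by (auto simp: split_index_def)
  have "x \<in> perms n" using x dp dq sp sq sub by (auto simp: perms_def prefix_letters_def)
  moreover have "k \<le> length p" using lp j \<open>k \<le> c * k\<close> by linarith
  then have "squished c k x" using squished_append[OF sqp] x by simp
  moreover have "k + 1 \<notin> set (take (c * k + 1) x)"
  proof -
    have "take (c * k + 1) x = take (c * k + 1) p" using lp j x by simp
    then show ?thesis using sp by (auto simp: prefix_letters_def dest: in_set_takeD)
  qed
  moreover have "k + 1 \<le> length x" using \<open>k \<le> length p\<close> x sq by (cases q) auto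
  ultimately show ?thesis by (simp add: squished_perms_def squished_Suc_iff)
qed

lemma squished_perms_Diff_imp_split_words:
  assumes c: "1 \<le> c" and n: "c * k + 1 < n"
    and x: "x \<in> squished_perms c k n - squished_perms c (k + 1) n"
  obtains j B where "(j, B) \<in> split_index c k n" "x \<in> split_words c k (prefix_letters n k B) B"
proof -
  have xp: "x \<in> perms n" and sqx: "squished c k x" and nsqx: "\<not> squished c (k + 1) x"
    using x by (auto simp: squished_perms_def)
  have dx: "distinct x" and sx: "set x = {1..n}" using xp by (auto simp: perms_def)
  have lx: "length x = n" using length_perms[OF xp] .
  have "k \<le> c * k" using c by simp
  then have kn: "k + 1 \<le> n" using n by linarith
  then have not_early: "k + 1 \<notin> set (take (c * k + 1) x)" using nsqx sqx lx by (simp add: squished_Suc_iff)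
  have "k + 1 \<in> set x" using sx kn by simp
  then obtain i where i: "i < n" "x ! i = k + 1" using lx by (metis in_set_conv_nth)
  have ick: "c * k + 1 \<le> i"
  proof (rule ccontr)
    assume "\<not> c * k + 1 \<le> i"
    then have "x ! i \<in> set (take (c * k + 1) x)" using i lx by (auto simp: in_set_conv_nth intro!: exI[of _ i])
    then show False using not_early i by simp
  qed
  define p where "p = take i x"
  define B where "B = set (drop (i + 1) x)"
  define q where "q = drop i x"
  have xpq: "x = p @ q" by (simp add: p_def q_def)
  have q: "q = (k + 1) # drop (i + 1) x" using i lx by (simp add: q_def Cons_nth_drop_Suc[symmetric])
  have sqp: "squished c k p"
    unfolding p_def by (rule squished_take[OF sqx]) (use ick in \<open>simp add: diff_mult_distrib2\<close>)
  have lp: "length p = i" using i lx by (simp add: p_def)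
  have low: "{1..k} \<subseteq> set p" using squished_letters[OF sqp] lp ick \<open>k \<le> c * k\<close> by simp
  have disj: "set p \<inter> set q = {}" using dx unfolding xpq by simp
  have kB: "k + 1 \<notin> B" using distinct_drop[OF dx, of i] q by (simp add: q_def B_def)
  have sq: "set q = insert (k + 1) B" using q by (simp add: B_def)
  have "set p = set x - set q" using disj xpq by auto
  then have sp: "set p = prefix_letters n k B" using sx sq by (simp add: prefix_letters_def)
  have "B \<subseteq> {k + 2..n}"
  proof
    fix y assume y: "y \<in> B"
    then have "y \<in> {1..n}" "y \<notin> {1..k}" "y \<noteq> k + 1"
      using sx xpq sq low disj kB by auto
    then show "y \<in> {k + 2..n}" by auto
  qed
  moreover have "card B = n - (i + 1)"
    unfolding B_def using dx lx by (simp add: distinct_card distinct_drop)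
  ultimately have "(i + 1, B) \<in> split_index c k n" using ick i by (simp add: split_index_def)
  moreover have "p \<in> squished_words c k (prefix_letters n k B)"
    using dx sqp sp by (simp add: squished_words_def p_def)
  moreover have "q \<in> headed_words (k + 1) B"
    using distinct_drop[OF dx, of i] q sq by (simp add: headed_words_def q_def)
  ultimately show thesis using that xpq by (auto simp: split_words_def)
qed

lemma set_dropWhile_split_words:
  assumes "x \<in> split_words c k (prefix_letters n k B) B"
  shows "set (dropWhile (\<lambda>y. y \<noteq> k + 1) x) = insert (k + 1) B"
proof -
  obtain p q where x: "x = p @ q" and p: "p \<in> squished_words c k (prefix_letters n k B)"
    and q: "q \<in> headed_words (k + 1) B"
    using assms by (auto simp: split_words_def)
  have "k + 1 \<notin> set p" using p by (simp add: squished_words_def prefix_letters_def)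
  then have "dropWhile (\<lambda>y. y \<noteq> k + 1) x = dropWhile (\<lambda>y. y \<noteq> k + 1) q"
    unfolding x by (intro dropWhile_append2) blast
  also have "\<dots> = q" using q by (cases q) (simp_all add: headed_words_def)
  finally show ?thesis using q by (simp add: headed_words_def)
qed

lemma split_words_disjoint:
  assumes "(j, B) \<in> split_index c k n" "(j', B') \<in> split_index c k n" "(j, B) \<noteq> (j', B')"
  shows "split_words c k (prefix_letters n k B) B \<inter> split_words c k (prefix_letters n k B') B' = {}"
proof -
  have "k + 1 \<notin> B" "k + 1 \<notin> B'" "card B = n - j" "card B' = n - j'" "j \<le> n" "j' \<le> n"
    using assms(1,2) by (auto simp: split_index_def)
  then have "B \<noteq> B'" using assms(3) by auto
  then have "insert (k + 1) B \<noteq> insert (k + 1) B'"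
    using \<open>k + 1 \<notin> B\<close> \<open>k + 1 \<notin> B'\<close> by (metis insert_ident)
  then show ?thesis using set_dropWhile_split_words by blast
qed

lemma card_classes_split_words_index:
  assumes c: "1 \<le> c" and jB: "(j, B) \<in> split_index c k n"
  shows "card (class_of (word_equiv c) ` split_words c k (prefix_letters n k B) B) =
    gcount c k (j - 1) * gcount c 1 (n - j + 1)"
proof -
  note facts = split_index_facts[OF c jB]
  interpret barrier_split c k "prefix_letters n k B" B by (rule facts(1))
  have "k \<le> c * k" using c by simp
  then have "k \<le> card (prefix_letters n k B)" using A(4) by linarith
  then have "card (class_of (word_equiv c) ` squished_words c k (prefix_letters n k B)) = gcount c k (j - 1)"
    using card_classes_squished_words[OF A(1,2) facts(3)] facts(2) by simp
  moreover have "card (class_of (word_equiv c) ` headed_words (k + 1) B) = gcount c 1 (n - j + 1)"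
    using card_classes_headed_words[OF facts(4,5)] jB by (simp add: split_index_def)
  ultimately show ?thesis using card_classes_split_words by simp
qed

lemma sum_split_index:
  "(\<Sum>jB\<in>split_index c k n. f (fst jB)) = (\<Sum>j = c * k + 2..n. f j * ((n - k - 1) choose (n - j)))"
proof -
  define Bs where "Bs j = {B. B \<subseteq> {k + 2..n} \<and> card B = n - j}" for j
  have "(\<Sum>jB\<in>split_index c k n. f (fst jB)) = (\<Sum>j = c * k + 2..n. \<Sum>B\<in>Bs j. f j)"
    unfolding split_index_def Bs_def[symmetric]
    by (subst sum.Sigma) (auto simp: Bs_def case_prod_beta intro: finite_subset[of _ "Pow {k + 2..n}"])
  also have "\<dots> = (\<Sum>j = c * k + 2..n. f j * ((n - k - 1) choose (n - j)))"
  proof (rule sum.cong[OF refl])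
    fix j
    have "card (Bs j) = card {k + 2..n} choose (n - j)" unfolding Bs_def by (rule n_subsets) simp
    then show "(\<Sum>B\<in>Bs j. f j) = f j * ((n - k - 1) choose (n - j))" by simp
  qed
  finally show ?thesis .
qed

lemma squished_perms_Diff_eq_UN:
  assumes c: "1 \<le> c" and n: "c * k + 1 < n"
  shows "squished_perms c k n - squished_perms c (k + 1) n =
    (\<Union>(j, B)\<in>split_index c k n. split_words c k (prefix_letters n k B) B)"
proof
  show "squished_perms c k n - squished_perms c (k + 1) n \<subseteq>
      (\<Union>(j, B)\<in>split_index c k n. split_words c k (prefix_letters n k B) B)"
  proof
    fix x assume "x \<in> squished_perms c k n - squished_perms c (k + 1) n"
    then obtain j B where "(j, B) \<in> split_index c k n" "x \<in> split_words c k (prefix_letters n k B) B"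
      by (rule squished_perms_Diff_imp_split_words[OF c n])
    then show "x \<in> (\<Union>(j, B)\<in>split_index c k n. split_words c k (prefix_letters n k B) B)" by blast
  qed
  show "(\<Union>(j, B)\<in>split_index c k n. split_words c k (prefix_letters n k B) B) \<subseteq>
      squished_perms c k n - squished_perms c (k + 1) n"
    using split_words_squished_perms[OF c] by auto
qed

text \<open>The \<open>n - j\<close> letters after \<open>k + 1\<close> form an arbitrary subset of \<open>{k + 2..n}\<close>,
  which accounts for the binomial coefficient.\<close>
lemma gcount_recurrence:
  assumes c: "1 \<le> c" and n: "c * k + 1 < n"
  shows "gcount c k n = gcount c (k + 1) n +
    (\<Sum>j = c * k + 2..n. gcount c k (j - 1) * gcount c 1 (n - j + 1) * ((n - k - 1) choose (n - j)))"
proof -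
  define S where "S = squished_perms c k n"
  define T where "T = squished_perms c (k + 1) n"
  define W :: "nat \<times> nat set \<Rightarrow> nat list set"
    where "W = (\<lambda>(j, B). split_words c k (prefix_letters n k B) B)"
  have ST: "S - T = (\<Union>jB\<in>split_index c k n. W jB)"
    unfolding S_def T_def W_def by (rule squished_perms_Diff_eq_UN[OF c n])
  have "T \<subseteq> S" unfolding S_def T_def squished_perms_def using squished_mono by auto
  then have split: "card (class_of (word_equiv c) ` S) =
      card (class_of (word_equiv c) ` T) + card (class_of (word_equiv c) ` (S - T))"
    using finite_squished_perms closed_under_squished_perms reflp_word_equiv symp_word_equiv
    unfolding S_def T_def by (intro card_classes_Diff) auto
  have "card (class_of (word_equiv c) ` (S - T)) =
      (\<Sum>jB\<in>split_index c k n. card (class_of (word_equiv c) ` W jB))"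
    unfolding ST
  proof (rule card_classes_UN_disjoint[OF _ _ _ _ reflp_word_equiv])
    show "finite (split_index c k n)"
      unfolding split_index_def by (auto intro: finite_subset[of _ "Pow {k + 2..n}"])
    show "\<forall>jB\<in>split_index c k n. finite (W jB)"
      using ST finite_squished_perms unfolding S_def by (metis UN_I finite_Diff finite_subset subsetI)
    show "\<forall>jB\<in>split_index c k n. closed_under (word_equiv c) (W jB)"
    proof (clarify)
      fix j B assume "(j, B) \<in> split_index c k n"
      then show "closed_under (word_equiv c) (W (j, B))"
        using barrier_split.closed_under_split_words[OF split_index_facts(1)[OF c]] by (simp add: W_def)
    qed
    show "\<forall>i\<in>split_index c k n. \<forall>j\<in>split_index c k n. i \<noteq> j \<longrightarrow> W i \<inter> W j = {}"
      using split_words_disjoint unfolding W_def by fast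
  qed
  also have "\<dots> = (\<Sum>jB\<in>split_index c k n. gcount c k (fst jB - 1) * gcount c 1 (n - fst jB + 1))"
    using card_classes_split_words_index[OF c] by (intro sum.cong refl) (auto simp: W_def)
  also have "\<dots> = (\<Sum>j = c * k + 2..n. gcount c k (j - 1) * gcount c 1 (n - j + 1) * ((n - k - 1) choose (n - j)))"
    by (rule sum_split_index)
  finally show ?thesis using split unfolding S_def T_def gcount_eq_card_classes by simp
qed

theorem lemma3p3:
  fixes c k n :: nat
  assumes "c \<ge> 1" and "k \<ge> 1" and "n \<ge> 1"
  shows "gcount c k n =
    (if n < c + 1 then fact (n - 1)
     else if n \<le> c * k + 1 then 1
     else gcount c (k + 1) n +
       (\<Sum>j = c * k + 2..n. gcount c k (j - 1) * gcount c 1 (n - j + 1) *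
          ((n - k - 1) choose (n - j))))"
  using gcount_short[OF assms(3) _ assms(2)] gcount_middle[OF assms(1) _ _ assms(2)]
    gcount_recurrence[OF assms(1)]
  by (simp add: not_less)

end
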